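(* Let $G$ be a simple graph, $k\ge 1$, and let $D$ be a $k$-optimal set in $G$. Then $G$ has a subgraph $M$ of maximum degree at most $k$ such that $d_M(v) = k$ for all $v \in V(G)-D$.
   Context: A vertex set $D$ is $k$-dependent if $G[D]$ has maximum degree at most $k-1$. For $D\subseteq V(G)$, $\phi_k(D)=k|D|-|E(G[D])|$ and $\phi_k(G)=\max_{D\subseteq V(G)}\phi_k(D)$. A $k$-optimal set is a $k$-dependent set $D$ with $\phi_k(D)=\phi_k(G)$. $d_M(v)$ is the degree of $v$ in $M$. *)

theory Defs
  imports Main
begin

definition simple_graph :: "'a set \<Rightarrow> 'a set set \<Rightarrow> bool" where
  "simple_graph V E \<longleftrightarrow> finite V \<and> (\<forall>e\<in>E. e \<subseteq> V \<and> card e = 2)"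

definition induced_edges :: "'a set set \<Rightarrow> 'a set \<Rightarrow> 'a set set" where
  "induced_edges E D = {e \<in> E. e \<subseteq> D}"

definition degree :: "'a set set \<Rightarrow> 'a \<Rightarrow> nat" where
  "degree F v = card {e \<in> F. v \<in> e}"

definition k_dependent :: "'a set \<Rightarrow> 'a set set \<Rightarrow> nat \<Rightarrow> 'a set \<Rightarrow> bool" where
  "k_dependent V E k D \<longleftrightarrow> D \<subseteq> V \<and> (\<forall>v\<in>D. degree (induced_edges E D) v \<le> k - 1)"

definition phi :: "'a set set \<Rightarrow> nat \<Rightarrow> 'a set \<Rightarrow> int" where
  "phi E k D = int k * int (card D) - int (card (induced_edges E D))"

definition phi_graph :: "'a set \<Rightarrow> 'a set set \<Rightarrow> nat \<Rightarrow> int" where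
  "phi_graph V E k = Max (phi E k ` Pow V)"

definition k_optimal :: "'a set \<Rightarrow> 'a set set \<Rightarrow> nat \<Rightarrow> 'a set \<Rightarrow> bool" where
  "k_optimal V E k D \<longleftrightarrow> k_dependent V E k D \<and> phi E k D = phi_graph V E k"

end

theory Submission
  imports Defs
begin

text \<open>
  Replace the constant k by an arbitrary weight function c and \<open>\<phi>\<^sub>k\<close> by
  \<open>\<phi>\<^sub>c(S) = c(S) - |E(G[S])|\<close>, and let D be any maximiser of \<open>\<phi>\<^sub>c\<close>; we find
  \<open>M \<subseteq> E\<close> with \<open>d\<^sub>M \<le> c\<close> on V and \<open>d\<^sub>M = c\<close> on \<open>V - D\<close>, by induction on |E|.
  If an edge uv joins two vertices of \<open>V - D\<close> of positive weight, put it into M, delete it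
  from G and lower c(u), c(v) by one: this lowers \<open>\<phi>\<^sub>c(S)\<close> for every S and keeps \<open>\<phi>\<^sub>c(D)\<close>,
  so D stays a maximiser. Otherwise the set A of vertices of \<open>V - D\<close> of positive weight is
  independent, and comparing D with \<open>X \<union> (D - Y)\<close>, where Y consists of the vertices w of D
  with \<open>c(w) \<le> |N(w) \<inter> X|\<close>, yields the Hall-type condition
  \<open>c(X) \<le> \<Sum>\<^sub>w\<^sub>\<in>\<^sub>D min(c(w), |N(w) \<inter> X|)\<close> for all \<open>X \<subseteq> A\<close>.
  By the b-matching version of Hall's theorem, proved by the usual induction that splits
  along a tight set, there are then edges between A and D whose degrees equal c on A
  and are at most c on D.
\<close>

lemma degree_Un_disjoint:
  assumes "finite M1" "finite M2" "M1 \<inter> M2 = {}"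
  shows "degree (M1 \<union> M2) v = degree M1 v + degree M2 v"
proof -
  have "{e \<in> M1 \<union> M2. v \<in> e} = {e \<in> M1. v \<in> e} \<union> {e \<in> M2. v \<in> e}" by auto
  then show ?thesis
    using assms unfolding degree_def by (simp add: card_Un_disjoint disjoint_iff)
qed

lemma degree_insert:
  assumes "finite M" "e \<notin> M"
  shows "degree (insert e M) v = degree M v + of_bool (v \<in> e)"
proof -
  have "{x \<in> insert e M. v \<in> x} = (if v \<in> e then insert e {x \<in> M. v \<in> x} else {x \<in> M. v \<in> x})"
    by auto
  then show ?thesis using assms by (simp add: degree_def)
qed

lemma degree_insert_edge_decrement:
  assumes "finite M" "{u, v} \<notin> M" "u \<noteq> v" "c u \<noteq> 0" "c v \<noteq> 0"
  shows "degree M x = (c(u := c u - 1, v := c v - 1)) x \<Longrightarrow> degree (insert {u, v} M) x = c x"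
    and "degree M x \<le> (c(u := c u - 1, v := c v - 1)) x \<Longrightarrow> degree (insert {u, v} M) x \<le> c x"
  using assms by (auto simp: degree_insert split: if_splits)

definition edges_between :: "'a set \<Rightarrow> 'a set \<Rightarrow> 'a set set" where
  "edges_between A D = {{a, w} | a w. a \<in> A \<and> w \<in> D}"

lemma finite_edges_between:
  assumes "finite A" "finite D"
  shows "finite (edges_between A D)"
proof -
  have "edges_between A D = (\<lambda>(a, w). {a, w}) ` (A \<times> D)"
    by (auto simp: edges_between_def)
  then show ?thesis using assms by simp
qed

lemma edges_between_mono: "A \<subseteq> A' \<Longrightarrow> edges_between A D \<subseteq> edges_between A' D"
  unfolding edges_between_def by blast

lemma edges_between_disjoint:
  assumes "X \<inter> Y = {}" "X \<inter> D = {}" "Y \<inter> D = {}"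
  shows "edges_between X D \<inter> edges_between Y D = {}"
proof -
  have False if "{a, w} = {a', w'}" "a \<in> X" "w \<in> D" "a' \<in> Y" "w' \<in> D" for a w a' w'
    using that assms by (auto simp: doubleton_eq_iff)
  then show ?thesis unfolding edges_between_def by blast
qed

lemma degree_outside_edges_between:
  assumes "M \<subseteq> edges_between A D" "x \<notin> A" "x \<notin> D"
  shows "degree M x = 0"
proof -
  have "{e \<in> M. x \<in> e} = {}" using assms by (auto simp: edges_between_def)
  then show ?thesis unfolding degree_def by (metis card.empty)
qed

definition adj_count :: "'a set set \<Rightarrow> 'a set \<Rightarrow> 'a \<Rightarrow> nat" where
  "adj_count E X w = card {a \<in> X. {a, w} \<in> E}"

lemma adj_count_mono: "finite X \<Longrightarrow> Z \<subseteq> X \<Longrightarrow> adj_count E Z w \<le> adj_count E X w"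
  unfolding adj_count_def by (rule card_mono) auto

lemma adj_count_Un:
  assumes "finite X" "finite Z" "X \<inter> Z = {}"
  shows "adj_count E (Z \<union> X) w = adj_count E Z w + adj_count E X w"
proof -
  have "{a \<in> Z \<union> X. {a, w} \<in> E} = {a \<in> Z. {a, w} \<in> E} \<union> {a \<in> X. {a, w} \<in> E}" by auto
  also have "card \<dots> = adj_count E Z w + adj_count E X w"
    unfolding adj_count_def using assms by (intro card_Un_disjoint) auto
  finally show ?thesis by (simp add: adj_count_def)
qed

lemma adj_count_remove_edge_other:
  "u \<noteq> v \<Longrightarrow> u \<noteq> w \<Longrightarrow> adj_count (E - {{v, w}}) X u = adj_count E X u"
  unfolding adj_count_def by (metis doubleton_eq_iff insert_Diff_single insert_iff)

lemma adj_count_remove_edge_le: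
  assumes "finite X"
  shows "adj_count E X w \<le> adj_count (E - {{v, w}}) X w + 1"
proof -
  have "{a \<in> X. {a, w} \<in> E} \<subseteq> insert v {a \<in> X. {a, w} \<in> E - {{v, w}}}"
    by (auto simp: doubleton_eq_iff)
  then have "adj_count E X w \<le> card (insert v {a \<in> X. {a, w} \<in> E - {{v, w}}})"
    unfolding adj_count_def using assms by (intro card_mono) auto
  also have "\<dots> \<le> adj_count (E - {{v, w}}) X w + 1"
    unfolding adj_count_def using assms by (simp add: card_insert_if)
  finally show ?thesis .
qed

text \<open>
  An upper bound for the weight that X can send to D along distinct edges when each
  \<open>w \<in> D\<close> accepts at most \<open>c w\<close>.
\<close>

definition hall_capacity :: "'a set set \<Rightarrow> ('a \<Rightarrow> nat) \<Rightarrow> 'a set \<Rightarrow> 'a set \<Rightarrow> nat" where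
  "hall_capacity E c D X = (\<Sum>w\<in>D. min (c w) (adj_count E X w))"

definition hall_condition :: "'a set set \<Rightarrow> ('a \<Rightarrow> nat) \<Rightarrow> 'a set \<Rightarrow> 'a set \<Rightarrow> bool" where
  "hall_condition E c A D \<longleftrightarrow> (\<forall>X\<subseteq>A. sum c X \<le> hall_capacity E c D X)"

definition b_matching :: "'a set set \<Rightarrow> 'a set \<Rightarrow> 'a set \<Rightarrow> ('a \<Rightarrow> nat) \<Rightarrow> 'a set set \<Rightarrow> bool" where
  "b_matching E A D c M \<longleftrightarrow> M \<subseteq> E \<and> M \<subseteq> edges_between A D \<and>
     (\<forall>a\<in>A. degree M a = c a) \<and> (\<forall>w\<in>D. degree M w \<le> c w)"

lemma hall_capacity_Un:
  assumes "finite X" "finite Z" "X \<inter> Z = {}"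
    and "\<forall>w\<in>D. c' w = c w - min (c w) (adj_count E X w)"
  shows "hall_capacity E c D (Z \<union> X) = hall_capacity E c' D Z + hall_capacity E c D X"
  unfolding hall_capacity_def adj_count_Un[OF assms(1-3)] sum.distrib[symmetric]
  using assms(4) by (intro sum.cong) (auto simp: min_def)

lemma hall_capacity_remove_edge:
  assumes "finite X" "finite D" "w \<in> D" "v \<notin> D" "c w \<noteq> 0"
    and "\<forall>u\<in>D - {w}. c' u = c u" "c' w = c w - 1"
  shows "hall_capacity E c D X \<le> hall_capacity (E - {{v, w}}) c' D X + 1"
proof -
  let ?E' = "E - {{v, w}}"
  have rest: "(\<Sum>u\<in>D - {w}. min (c u) (adj_count E X u))
      = (\<Sum>u\<in>D - {w}. min (c' u) (adj_count ?E' X u))"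
  proof (intro sum.cong refl)
    fix u assume u: "u \<in> D - {w}"
    then have "u \<noteq> v" "u \<noteq> w" using assms(4) by auto
    then show "min (c u) (adj_count E X u) = min (c' u) (adj_count ?E' X u)"
      using assms(6) u by (simp add: adj_count_remove_edge_other)
  qed
  have "min (c w) (adj_count E X w) \<le> min (c' w) (adj_count ?E' X w) + 1"
    using adj_count_remove_edge_le[OF assms(1), of E w v] assms(5,7) by (simp add: min_def)
  then show ?thesis
    unfolding hall_capacity_def sum.remove[OF assms(2,3)] rest by linarith
qed

lemma hall_condition_restrict:
  assumes "hall_condition E c A D" "X \<subseteq> A" "finite X"
    and "\<forall>x\<in>X. c1 x = c x" "\<forall>w\<in>D. c1 w = min (c w) (adj_count E X w)"
  shows "hall_condition E c1 X D"
  unfolding hall_condition_def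
proof (intro allI impI)
  fix Z assume Z: "Z \<subseteq> X"
  have "hall_capacity E c1 D Z = hall_capacity E c D Z"
    unfolding hall_capacity_def
  proof (intro sum.cong refl)
    fix w assume "w \<in> D"
    then show "min (c1 w) (adj_count E Z w) = min (c w) (adj_count E Z w)"
      using assms(5) adj_count_mono[OF assms(3) Z, of E w] by (auto simp: min_def)
  qed
  moreover have "sum c1 Z = sum c Z"
    using Z assms(4) by (intro sum.cong) auto
  ultimately show "sum c1 Z \<le> hall_capacity E c1 D Z"
    using assms(1,2) Z by (auto simp: hall_condition_def)
qed

lemma hall_condition_complement_of_tight:
  assumes "hall_condition E c A D" "X \<subseteq> A" "finite A"
    and tight: "hall_capacity E c D X \<le> sum c X"
    and "\<forall>x\<in>A - X. c2 x = c x" "\<forall>w\<in>D. c2 w = c w - min (c w) (adj_count E X w)"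
  shows "hall_condition E c2 (A - X) D"
  unfolding hall_condition_def
proof (intro allI impI)
  fix Z assume Z: "Z \<subseteq> A - X"
  have fin: "finite X" "finite Z" "X \<inter> Z = {}"
    using Z assms(2,3) by (auto intro: rev_finite_subset)
  have "sum c Z + sum c X = sum c (Z \<union> X)"
    using fin by (simp add: sum.union_disjoint Int_commute)
  also have "\<dots> \<le> hall_capacity E c D (Z \<union> X)"
    using assms(1) Z assms(2) unfolding hall_condition_def by (meson Diff_subset Un_least order_trans)
  also have "\<dots> = hall_capacity E c2 D Z + hall_capacity E c D X"
    using hall_capacity_Un[OF fin assms(6)] .
  finally have "sum c Z \<le> hall_capacity E c2 D Z"
    using tight by linarith
  moreover have "sum c2 Z = sum c Z"
    using Z assms(5) by (intro sum.cong) auto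
  ultimately show "sum c2 Z \<le> hall_capacity E c2 D Z" by simp
qed

lemma hall_condition_neighbour:
  assumes "hall_condition E c A D" "v \<in> A" "c v \<noteq> 0"
  obtains w where "w \<in> D" "{v, w} \<in> E" "c w \<noteq> 0"
proof -
  have "sum c {v} \<le> hall_capacity E c D {v}"
    using assms(1,2) unfolding hall_condition_def by blast
  then have "hall_capacity E c D {v} \<noteq> 0" using assms(3) by simp
  then obtain w where "w \<in> D" "min (c w) (adj_count E {v} w) \<noteq> 0"
    unfolding hall_capacity_def by (meson sum.neutral)
  moreover have "adj_count E {v} w = of_bool ({v, w} \<in> E)"
    unfolding adj_count_def by (simp add: Collect_conj_eq)
  ultimately show ?thesis using that by auto
qed

lemma hall_condition_remove_edge:
  assumes hall: "hall_condition E c A D" and "finite A" "finite D" "A \<inter> D = {}"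
    and "v \<in> A" "w \<in> D" "c v \<noteq> 0" "c w \<noteq> 0"
    and slack: "\<forall>X\<subseteq>A - {v}. sum c X \<noteq> 0 \<longrightarrow> sum c X < hall_capacity E c D X"
  shows "hall_condition (E - {{v, w}}) (c(v := c v - 1, w := c w - 1)) A D"
  unfolding hall_condition_def
proof (intro allI impI)
  let ?c' = "c(v := c v - 1, w := c w - 1)"
  fix X assume X: "X \<subseteq> A"
  have fX: "finite X" using X assms(2) finite_subset by auto
  have "v \<notin> D" "v \<noteq> w" using assms(4-6) by auto
  then have cap: "hall_capacity E c D X \<le> hall_capacity (E - {{v, w}}) ?c' D X + 1"
    using assms(3,6,8) fX by (intro hall_capacity_remove_edge) auto
  have c'_X: "?c' x = c x" if "x \<in> X - {v}" for x
    using that X assms(4,6) by auto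
  show "sum ?c' X \<le> hall_capacity (E - {{v, w}}) ?c' D X"
  proof (cases "v \<in> X")
    case True
    have "sum ?c' X = ?c' v + sum ?c' (X - {v})"
      by (rule sum.remove[OF fX True])
    moreover have "sum ?c' (X - {v}) = sum c (X - {v})"
      using c'_X by (intro sum.cong) auto
    moreover have "?c' v = c v - 1"
      using \<open>v \<noteq> w\<close> by simp
    moreover have "sum c X = c v + sum c (X - {v})"
      using sum.remove[OF fX True] .
    moreover have "sum c X \<le> hall_capacity E c D X"
      using hall X by (auto simp: hall_condition_def)
    ultimately show ?thesis using cap assms(7) by linarith
  next
    case False
    then have "sum ?c' X = sum c X" using c'_X by (intro sum.cong) auto
    moreover have "sum c X \<noteq> 0 \<Longrightarrow> sum c X < hall_capacity E c D X"
      using slack X False by auto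
    ultimately show ?thesis using cap by (cases "sum c X = 0") auto
  qed
qed

lemma b_matching_Un:
  assumes M1: "b_matching E X D c1 M1" and M2: "b_matching E Y D c2 M2"
    and fin: "finite X" "finite Y" "finite D"
    and disj: "X \<inter> Y = {}" "X \<inter> D = {}" "Y \<inter> D = {}"
    and c1: "\<forall>x\<in>X. c1 x = c x" and c2: "\<forall>y\<in>Y. c2 y = c y"
    and c12: "\<forall>w\<in>D. c1 w + c2 w \<le> c w"
  shows "b_matching E (X \<union> Y) D c (M1 \<union> M2)"
proof -
  have sub: "M1 \<subseteq> edges_between X D" "M2 \<subseteq> edges_between Y D"
    using M1 M2 by (simp_all add: b_matching_def)
  have "finite M1" "finite M2"
    using rev_finite_subset[OF finite_edges_between sub(1)]
      rev_finite_subset[OF finite_edges_between sub(2)] fin by simp_all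
  moreover have "M1 \<inter> M2 = {}"
    using sub edges_between_disjoint[OF disj] by blast
  ultimately have deg: "degree (M1 \<union> M2) u = degree M1 u + degree M2 u" for u
    by (rule degree_Un_disjoint)
  show ?thesis
    unfolding b_matching_def
  proof (intro conjI ballI)
    show "M1 \<union> M2 \<subseteq> E" using M1 M2 by (simp add: b_matching_def)
    show "M1 \<union> M2 \<subseteq> edges_between (X \<union> Y) D"
      using sub edges_between_mono[of X "X \<union> Y" D] edges_between_mono[of Y "X \<union> Y" D] by blast
  next
    fix a assume a: "a \<in> X \<union> Y"
    show "degree (M1 \<union> M2) a = c a"
    proof (cases "a \<in> X")
      case True
      then have "degree M2 a = 0"
        using disj by (intro degree_outside_edges_between[OF sub(2)]) auto
      then show ?thesis using True M1 c1 deg by (simp add: b_matching_def)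
    next
      case False
      then have "degree M1 a = 0"
        using a disj by (intro degree_outside_edges_between[OF sub(1)]) auto
      then show ?thesis using a False M2 c2 deg by (simp add: b_matching_def)
    qed
  next
    fix w assume "w \<in> D"
    then have "degree M1 w + degree M2 w \<le> c1 w + c2 w" "c1 w + c2 w \<le> c w"
      using M1 M2 c12 by (auto intro!: add_mono simp: b_matching_def)
    then show "degree (M1 \<union> M2) w \<le> c w" using deg[of w] by linarith
  qed
qed

lemma b_matching_insert_edge:
  assumes M: "b_matching (E - {{v, w}}) A D (c(v := c v - 1, w := c w - 1)) M"
    and "{v, w} \<in> E" "v \<in> A" "w \<in> D" "A \<inter> D = {}" "c v \<noteq> 0" "c w \<noteq> 0"
    and "finite A" "finite D"
  shows "b_matching E A D c (insert {v, w} M)"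
proof -
  have "v \<noteq> w" using assms(3-5) by auto
  have sub: "M \<subseteq> edges_between A D" using M by (simp add: b_matching_def)
  then have fin: "finite M"
    using rev_finite_subset[OF finite_edges_between[OF assms(8,9)]] by blast
  have fresh: "{v, w} \<notin> M" using M by (auto simp: b_matching_def)
  note deg = degree_insert_edge_decrement[OF fin fresh \<open>v \<noteq> w\<close> assms(6,7)]
  show ?thesis
    unfolding b_matching_def
  proof (intro conjI ballI)
    show "insert {v, w} M \<subseteq> E" using M assms(2) by (auto simp: b_matching_def)
    show "insert {v, w} M \<subseteq> edges_between A D"
      using sub assms(3,4) by (auto simp: edges_between_def)
  next
    fix a assume "a \<in> A"
    then show "degree (insert {v, w} M) a = c a"
      using M by (intro deg(1)) (simp_all add: b_matching_def)
  next
    fix u assume "u \<in> D"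
    then show "degree (insert {v, w} M) u \<le> c u"
      using M by (intro deg(2)) (simp_all add: b_matching_def)
  qed
qed

text \<open>
  A tight set \<open>X\<close> saturates each capacity up to \<open>min (c w) (adj_count E X w)\<close>; the
  problem splits into one for \<open>X\<close> with these capacities and one for \<open>A - X\<close> with the rest.
\<close>

lemma b_matching_tight_split:
  assumes hall: "hall_condition E c A D" and fin: "finite A" "finite D" and disj: "A \<inter> D = {}"
    and X: "X \<subseteq> A" "hall_capacity E c D X \<le> sum c X"
    and IH_X: "\<And>c'. sum c' X = sum c X \<Longrightarrow> hall_condition E c' X D \<Longrightarrow> \<exists>M. b_matching E X D c' M"
    and IH_rest: "\<And>c'. sum c' (A - X) = sum c (A - X) \<Longrightarrow> hall_condition E c' (A - X) D \<Longrightarrow>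
      \<exists>M. b_matching E (A - X) D c' M"
  shows "\<exists>M. b_matching E A D c M"
proof -
  define c1 where "c1 x = (if x \<in> D then min (c x) (adj_count E X x) else c x)" for x
  define c2 where "c2 x = (if x \<in> D then c x - min (c x) (adj_count E X x) else c x)" for x
  have fX: "finite X" using rev_finite_subset[OF fin(1) X(1)] .
  have disjX: "X \<inter> D = {}" "(A - X) \<inter> D = {}" "X \<inter> (A - X) = {}"
    using X(1) disj by auto
  have c1_X: "\<forall>x\<in>X. c1 x = c x" and c2_rest: "\<forall>x\<in>A - X. c2 x = c x"
    using disjX by (auto simp: c1_def c2_def)
  have "hall_condition E c1 X D"
    using hall X(1) fX c1_X by (rule hall_condition_restrict) (auto simp: c1_def)
  moreover have "sum c1 X = sum c X"
    using c1_X by (intro sum.cong refl) simp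
  ultimately obtain M1 where M1: "b_matching E X D c1 M1"
    using IH_X by blast
  have "hall_condition E c2 (A - X) D"
    using hall X(1) fin(1) X(2) c2_rest
    by (rule hall_condition_complement_of_tight) (auto simp: c2_def)
  moreover have "sum c2 (A - X) = sum c (A - X)"
    using c2_rest by (intro sum.cong refl) simp
  ultimately obtain M2 where M2: "b_matching E (A - X) D c2 M2"
    using IH_rest by blast
  have "b_matching E (X \<union> (A - X)) D c (M1 \<union> M2)"
    using fX fin disjX c1_X c2_rest
    by (intro b_matching_Un[OF M1 M2]) (auto simp: c1_def c2_def)
  moreover have "X \<union> (A - X) = A" using X(1) by blast
  ultimately show ?thesis by auto
qed

lemma b_matching_edge_step:
  assumes hall: "hall_condition E c A D" and fin: "finite A" "finite D" and disj: "A \<inter> D = {}"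
    and v: "v \<in> A" "c v \<noteq> 0"
    and slack: "\<forall>X\<subseteq>A - {v}. sum c X \<noteq> 0 \<longrightarrow> sum c X < hall_capacity E c D X"
    and IH: "\<And>E' c'. sum c' A < sum c A \<Longrightarrow> hall_condition E' c' A D \<Longrightarrow> \<exists>M. b_matching E' A D c' M"
  shows "\<exists>M. b_matching E A D c M"
proof -
  obtain w where w: "w \<in> D" "{v, w} \<in> E" "c w \<noteq> 0"
    using hall_condition_neighbour[OF hall v] .
  let ?c' = "c(v := c v - 1, w := c w - 1)"
  have "v \<noteq> w" using v(1) w(1) disj by auto
  have "sum ?c' (A - {v}) = sum c (A - {v})"
    using disj w(1) by (intro sum.cong) auto
  then have "sum ?c' A < sum c A"
    using sum.remove[OF fin(1) v(1), of ?c'] sum.remove[OF fin(1) v(1), of c] v(2) \<open>v \<noteq> w\<close>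
    by simp
  moreover have "hall_condition (E - {{v, w}}) ?c' A D"
    using hall fin disj v(1) w(1) v(2) w(3) slack by (rule hall_condition_remove_edge)
  ultimately obtain M where "b_matching (E - {{v, w}}) A D ?c' M"
    using IH by blast
  then have "b_matching E A D c (insert {v, w} M)"
    using w v fin disj by (intro b_matching_insert_edge) auto
  then show ?thesis ..
qed

theorem b_matching_exists:
  assumes "finite A" "finite D" "A \<inter> D = {}" "hall_condition E c A D"
  shows "\<exists>M. b_matching E A D c M"
  using assms
proof (induction "sum c A" arbitrary: A E c rule: less_induct)
  case less
  note fin = less.prems(1,2) and disj = less.prems(3) and hall = less.prems(4)
  show ?case
  proof (cases "\<exists>v\<in>A. c v \<noteq> 0")
    case False
    then have "b_matching E A D c {}"
      by (simp add: b_matching_def degree_def)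
    then show ?thesis ..
  next
    case True
    then obtain v where v: "v \<in> A" "c v \<noteq> 0" by blast
    show ?thesis
    proof (cases "\<exists>X\<subseteq>A - {v}. sum c X \<noteq> 0 \<and> hall_capacity E c D X \<le> sum c X")
      case True
      then obtain X where X: "X \<subseteq> A - {v}" "sum c X \<noteq> 0" "hall_capacity E c D X \<le> sum c X"
        by blast
      have XA: "X \<subseteq> A" and fX: "finite X" using X(1) rev_finite_subset[OF fin(1)] by auto
      have "sum c A = sum c X + sum c (A - X)"
        using sum.subset_diff[OF XA fin(1), of c] by simp
      moreover have "c v \<le> sum c (A - X)"
        using v X(1) fin(1) by (intro member_le_sum) auto
      ultimately have lt: "sum c X < sum c A" "sum c (A - X) < sum c A"
        using v(2) X(2) by linarith+
      have disjX: "X \<inter> D = {}" "(A - X) \<inter> D = {}" using XA disj by auto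
      show ?thesis
      proof (rule b_matching_tight_split[OF hall fin disj XA X(3)])
        fix c' assume "sum c' X = sum c X" "hall_condition E c' X D"
        then show "\<exists>M. b_matching E X D c' M"
          using less.hyps[OF _ fX fin(2) disjX(1)] lt(1) by simp
      next
        fix c' assume "sum c' (A - X) = sum c (A - X)" "hall_condition E c' (A - X) D"
        then show "\<exists>M. b_matching E (A - X) D c' M"
          using less.hyps[OF _ finite_Diff[OF fin(1)] fin(2) disjX(2)] lt(2) by simp
      qed
    next
      case False
      then have "\<forall>X\<subseteq>A - {v}. sum c X \<noteq> 0 \<longrightarrow> sum c X < hall_capacity E c D X"
        by (meson not_le)
      then show ?thesis
        using less.hyps fin disj by (intro b_matching_edge_step[OF hall fin disj v]) auto
    qed
  qed
qed

definition weighted_phi :: "'a set set \<Rightarrow> ('a \<Rightarrow> nat) \<Rightarrow> 'a set \<Rightarrow> int" where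
  "weighted_phi E c S = int (sum c S) - int (card (induced_edges E S))"

lemma weighted_phi_const: "weighted_phi E (\<lambda>_. k) S = phi E k S"
  by (simp add: weighted_phi_def phi_def mult.commute)

lemma finite_induced_edges: "finite S \<Longrightarrow> finite (induced_edges E S)"
  unfolding induced_edges_def by (rule rev_finite_subset[of "Pow S"]) auto

lemma sum_fun_upd_decrement:
  fixes c :: "'a \<Rightarrow> nat"
  assumes "finite S" "c u \<noteq> 0"
  shows "sum (c(u := c u - 1)) S + of_bool (u \<in> S) = sum c S"
proof (cases "u \<in> S")
  case True
  have "sum (c(u := c u - 1)) S = (c u - 1) + sum c (S - {u})"
    using sum.remove[OF assms(1) True, of "c(u := c u - 1)"] by simp
  moreover have "sum c S = c u + sum c (S - {u})"
    using sum.remove[OF assms(1) True] .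
  ultimately show ?thesis using True assms(2) by simp
next
  case False
  then have "sum (c(u := c u - 1)) S = sum c S" by (intro sum.cong) auto
  then show ?thesis using False by simp
qed

lemma weighted_phi_remove_edge_le:
  assumes "finite S" "u \<noteq> v" "c u \<noteq> 0" "c v \<noteq> 0"
  shows "weighted_phi (E - {{u, v}}) (c(u := c u - 1, v := c v - 1)) S \<le> weighted_phi E c S"
proof -
  let ?c' = "c(u := c u - 1, v := c v - 1)"
  have "?c' = (c(u := c u - 1))(v := (c(u := c u - 1)) v - 1)"
    using assms(2) by simp
  then have weight: "sum ?c' S + of_bool (v \<in> S) + of_bool (u \<in> S) = sum c S"
    using sum_fun_upd_decrement[OF assms(1), of "c(u := c u - 1)" v]
      sum_fun_upd_decrement[OF assms(1), of c u] assms(2-4) by simp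
  have "card (induced_edges E S) \<le> card (induced_edges (E - {{u, v}}) S) + of_bool (u \<in> S)"
  proof (cases "u \<in> S")
    case True
    have "induced_edges E S \<subseteq> insert {u, v} (induced_edges (E - {{u, v}}) S)"
      by (auto simp: induced_edges_def)
    then have "card (induced_edges E S) \<le> card (insert {u, v} (induced_edges (E - {{u, v}}) S))"
      using finite_induced_edges[OF assms(1)] by (intro card_mono) auto
    also have "\<dots> \<le> card (induced_edges (E - {{u, v}}) S) + 1"
      by (simp add: card_insert_if finite_induced_edges[OF assms(1)])
    finally show ?thesis using True by simp
  next
    case False
    then have "induced_edges E S = induced_edges (E - {{u, v}}) S"
      by (auto simp: induced_edges_def)
    then show ?thesis by simp
  qed
  then show ?thesis
    using weight unfolding weighted_phi_def by linarith
qed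

lemma weighted_phi_remove_edge_outside:
  assumes "u \<notin> S" "v \<notin> S"
  shows "weighted_phi (E - {{u, v}}) (c(u := c u - 1, v := c v - 1)) S = weighted_phi E c S"
proof -
  have "induced_edges (E - {{u, v}}) S = induced_edges E S"
    using assms by (auto simp: induced_edges_def)
  moreover have "sum (c(u := c u - 1, v := c v - 1)) S = sum c S"
    using assms by (intro sum.cong) auto
  ultimately show ?thesis by (simp add: weighted_phi_def)
qed

lemma weighted_phi_optimal_remove_edge:
  assumes "finite V" "\<forall>S\<subseteq>V. weighted_phi E c S \<le> weighted_phi E c D"
    and "u \<noteq> v" "u \<notin> D" "v \<notin> D" "c u \<noteq> 0" "c v \<noteq> 0"
  shows "\<forall>S\<subseteq>V. weighted_phi (E - {{u, v}}) (c(u := c u - 1, v := c v - 1)) S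
    \<le> weighted_phi (E - {{u, v}}) (c(u := c u - 1, v := c v - 1)) D"
proof (intro allI impI)
  let ?E' = "E - {{u, v}}" and ?c' = "c(u := c u - 1, v := c v - 1)"
  fix S assume S: "S \<subseteq> V"
  then have "weighted_phi ?E' ?c' S \<le> weighted_phi E c S"
    using assms(1,3,6,7) finite_subset by (intro weighted_phi_remove_edge_le) auto
  also have "\<dots> \<le> weighted_phi E c D" using assms(2) S by blast
  also have "\<dots> = weighted_phi ?E' ?c' D"
    using assms(4,5) by (rule weighted_phi_remove_edge_outside[symmetric])
  finally show "weighted_phi ?E' ?c' S \<le> weighted_phi ?E' ?c' D" .
qed

lemma card_2_eq_doubleton:
  assumes "card e = 2" "a \<in> e" "b \<in> e" "a \<noteq> b"
  shows "e = {a, b}"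
proof -
  have "finite e" using assms(1) by (metis card.infinite zero_neq_numeral)
  moreover have "card {a, b} = card e" using assms(1,4) by simp
  ultimately show ?thesis using assms(2,3) by (metis card_subset_eq empty_subsetI insert_subset)
qed

lemma card_induced_edges_Un_independent:
  assumes "\<forall>e\<in>E. card e = 2" "finite X" "finite T" "X \<inter> T = {}" "\<forall>e\<in>E. \<not> e \<subseteq> X"
  shows "card (induced_edges E (X \<union> T)) \<le> card (induced_edges E T) + (\<Sum>w\<in>T. adj_count E X w)"
proof -
  define U where "U = (\<Union>w\<in>T. (\<lambda>a. {a, w}) ` {a \<in> X. {a, w} \<in> E})"
  have incl: "induced_edges E (X \<union> T) \<subseteq> induced_edges E T \<union> U"
  proof
    fix e assume e: "e \<in> induced_edges E (X \<union> T)"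
    then have eE: "e \<in> E" and eXT: "e \<subseteq> X \<union> T" by (auto simp: induced_edges_def)
    show "e \<in> induced_edges E T \<union> U"
    proof (cases "e \<subseteq> T")
      case True
      then show ?thesis using eE by (simp add: induced_edges_def)
    next
      case False
      then obtain a where a: "a \<in> e" "a \<in> X" using eXT by blast
      obtain b where b: "b \<in> e" "b \<in> T" using eXT assms(5) eE by blast
      have "a \<noteq> b" using a(2) b(2) assms(4) by blast
      then have "e = {a, b}"
        using card_2_eq_doubleton[of e a b] assms(1) eE a(1) b(1) by blast
      then have "e \<in> (\<lambda>x. {x, b}) ` {x \<in> X. {x, b} \<in> E}"
        using a(2) eE by blast
      then show ?thesis using b(2) unfolding U_def by blast
    qed
  qed
  have fin: "finite (induced_edges E T \<union> U)"
    using finite_induced_edges[OF assms(3)] assms(2,3) by (simp add: U_def)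
  have cardU: "card U \<le> (\<Sum>w\<in>T. adj_count E X w)"
  proof -
    have "card U \<le> (\<Sum>w\<in>T. card ((\<lambda>a. {a, w}) ` {a \<in> X. {a, w} \<in> E}))"
      unfolding U_def using assms(3) by (rule card_UN_le)
    also have "\<dots> \<le> (\<Sum>w\<in>T. adj_count E X w)"
      unfolding adj_count_def by (intro sum_mono card_image_le) (simp add: assms(2))
    finally show ?thesis .
  qed
  have "card (induced_edges E (X \<union> T)) \<le> card (induced_edges E T \<union> U)"
    using fin incl by (rule card_mono)
  also have "\<dots> \<le> card (induced_edges E T) + card U"
    by (rule card_Un_le)
  finally show ?thesis using cardU by linarith
qed

lemma hall_inequality_of_optimal:
  assumes "finite V" "\<forall>e\<in>E. e \<subseteq> V \<and> card e = 2" "D \<subseteq> V"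
    and opt: "\<forall>S\<subseteq>V. weighted_phi E c S \<le> weighted_phi E c D"
    and X: "X \<subseteq> V - D" "\<forall>e\<in>E. \<not> e \<subseteq> X"
  shows "sum c X \<le> hall_capacity E c D X"
proof -
  define Y where "Y = {w \<in> D. c w \<le> adj_count E X w}"
  have fD: "finite D" and fX: "finite X"
    using assms(1,3) X(1) finite_subset by blast+
  have YD: "Y \<subseteq> D" by (auto simp: Y_def)
  have disj: "X \<inter> (D - Y) = {}" using X(1) by blast
  have "card (induced_edges E (X \<union> (D - Y)))
      \<le> card (induced_edges E (D - Y)) + (\<Sum>w\<in>D - Y. adj_count E X w)"
    using assms(2) fX fD disj X(2) by (intro card_induced_edges_Un_independent) auto
  moreover have "card (induced_edges E (D - Y)) \<le> card (induced_edges E D)"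
    using finite_induced_edges[OF fD] by (intro card_mono) (auto simp: induced_edges_def)
  moreover have "X \<union> (D - Y) \<subseteq> V" using assms(3) X(1) by blast
  then have "weighted_phi E c (X \<union> (D - Y)) \<le> weighted_phi E c D" using opt by blast
  moreover have "sum c (X \<union> (D - Y)) = sum c X + sum c (D - Y)"
    using fX fD disj by (simp add: sum.union_disjoint)
  moreover have "sum c D = sum c (D - Y) + sum c Y"
    using sum.subset_diff[OF YD fD] .
  ultimately have "sum c X \<le> sum c Y + (\<Sum>w\<in>D - Y. adj_count E X w)"
    unfolding weighted_phi_def by linarith
  also have "\<dots> = hall_capacity E c D X"
  proof -
    have "(\<Sum>w\<in>D - Y. adj_count E X w) = (\<Sum>w\<in>D - Y. min (c w) (adj_count E X w))"
      by (intro sum.cong) (auto simp: Y_def)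
    moreover have "sum c Y = (\<Sum>w\<in>Y. min (c w) (adj_count E X w))"
      by (intro sum.cong) (auto simp: Y_def)
    ultimately show ?thesis
      unfolding hall_capacity_def
      using sum.subset_diff[OF YD fD, of "\<lambda>w. min (c w) (adj_count E X w)"] by simp
  qed
  finally show ?thesis .
qed

lemma degree_constrained_subgraph_independent:
  assumes "finite V" "\<forall>e\<in>E. e \<subseteq> V \<and> card e = 2" "D \<subseteq> V"
    and opt: "\<forall>S\<subseteq>V. weighted_phi E c S \<le> weighted_phi E c D"
    and indep: "\<forall>e\<in>E. \<not> e \<subseteq> {x \<in> V - D. c x \<noteq> 0}"
  shows "\<exists>M\<subseteq>E. (\<forall>v\<in>V. degree M v \<le> c v) \<and> (\<forall>v\<in>V - D. degree M v = c v)"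
proof -
  define A where "A = {x \<in> V - D. c x \<noteq> 0}"
  have "hall_condition E c A D"
    unfolding hall_condition_def
  proof (intro allI impI)
    fix X assume XA: "X \<subseteq> A"
    then have "X \<subseteq> V - D" by (auto simp: A_def)
    moreover have "\<forall>e\<in>E. \<not> e \<subseteq> X" using indep XA unfolding A_def by blast
    ultimately show "sum c X \<le> hall_capacity E c D X"
      by (rule hall_inequality_of_optimal[OF assms(1-3) opt])
  qed
  moreover have "finite A" "finite D" "A \<inter> D = {}"
    using assms(1,3) finite_subset by (auto simp: A_def)
  ultimately obtain M where M: "b_matching E A D c M"
    using b_matching_exists by blast
  then have sub: "M \<subseteq> edges_between A D" by (simp add: b_matching_def)
  have outside: "degree M x = c x" if "x \<in> V - D" for x
  proof (cases "x \<in> A")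
    case True
    then show ?thesis using M by (simp add: b_matching_def)
  next
    case False
    then show ?thesis
      using that degree_outside_edges_between[OF sub False] by (simp add: A_def)
  qed
  have "degree M x \<le> c x" if "x \<in> V" for x
    using M outside[of x] that by (cases "x \<in> D") (simp_all add: b_matching_def)
  then show ?thesis
    using M outside unfolding b_matching_def by blast
qed

theorem degree_constrained_subgraph:
  assumes "finite V" "\<forall>e\<in>E. e \<subseteq> V \<and> card e = 2" "D \<subseteq> V"
    and "\<forall>S\<subseteq>V. weighted_phi E c S \<le> weighted_phi E c D"
  shows "\<exists>M\<subseteq>E. (\<forall>v\<in>V. degree M v \<le> c v) \<and> (\<forall>v\<in>V - D. degree M v = c v)"
  using assms
proof (induction "card E" arbitrary: E c rule: less_induct)
  case less
  note graph = less.prems(1-3) and opt = less.prems(4)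
  show ?case
  proof (cases "\<exists>e\<in>E. e \<subseteq> {x \<in> V - D. c x \<noteq> 0}")
    case False
    then show ?thesis
      using degree_constrained_subgraph_independent[OF graph opt] by blast
  next
    case True
    then obtain e where "e \<in> E" "e \<subseteq> {x \<in> V - D. c x \<noteq> 0}" by blast
    moreover from this(1) have "card e = 2" using graph(2) by blast
    then obtain u v where "e = {u, v}" "u \<noteq> v" by (auto simp: card_2_iff)
    ultimately have e: "{u, v} \<in> E" "u \<noteq> v" "{u, v} \<subseteq> {x \<in> V - D. c x \<noteq> 0}"
      by simp_all
    let ?E' = "E - {{u, v}}" and ?c' = "c(u := c u - 1, v := c v - 1)"
    have "finite E" using graph(1,2) finite_subset[of E "Pow V"] by blast
    then have smaller: "card ?E' < card E" using e(1) by (rule card_Diff1_less)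
    have opt': "\<forall>S\<subseteq>V. weighted_phi ?E' ?c' S \<le> weighted_phi ?E' ?c' D"
      using graph(1) opt e(2,3) by (intro weighted_phi_optimal_remove_edge) auto
    have graph': "\<forall>e\<in>?E'. e \<subseteq> V \<and> card e = 2" using graph(2) by blast
    obtain M where M: "M \<subseteq> ?E'" "\<forall>x\<in>V. degree M x \<le> ?c' x" "\<forall>x\<in>V - D. degree M x = ?c' x"
      using less.hyps[OF smaller graph(1) graph' graph(3) opt'] by blast
    have fin: "finite M" using M(1) \<open>finite E\<close> by (meson Diff_subset finite_subset)
    have fresh: "{u, v} \<notin> M" using M(1) by blast
    have "c u \<noteq> 0" "c v \<noteq> 0" using e(3) by auto
    note deg = degree_insert_edge_decrement[OF fin fresh e(2) this]
    have "insert {u, v} M \<subseteq> E" using M(1) e(1) by blast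
    moreover have "\<forall>x\<in>V. degree (insert {u, v} M) x \<le> c x"
      using M(2) deg(2) by blast
    moreover have "\<forall>x\<in>V - D. degree (insert {u, v} M) x = c x"
      using M(3) deg(1) by blast
    ultimately show ?thesis by blast
  qed
qed

theorem mainTheorem11:
  fixes V :: "'a set" and E :: "'a set set" and k :: nat and D :: "'a set"
  assumes "simple_graph V E" and "k \<ge> 1" and "k_optimal V E k D"
  shows "\<exists>M. M \<subseteq> E \<and> (\<forall>v\<in>V. degree M v \<le> k) \<and> (\<forall>v\<in>V - D. degree M v = k)"
proof -
  have graph: "finite V" "\<forall>e\<in>E. e \<subseteq> V \<and> card e = 2"
    using assms(1) by (auto simp: simple_graph_def)
  \<comment> \<open>Only the maximality of \<open>\<phi>\<^sub>k(D)\<close> is used.\<close>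
  have DV: "D \<subseteq> V" and max: "phi E k D = Max (phi E k ` Pow V)"
    using assms(3) by (auto simp: k_optimal_def k_dependent_def phi_graph_def)
  have "\<forall>S\<subseteq>V. weighted_phi E (\<lambda>_. k) S \<le> weighted_phi E (\<lambda>_. k) D"
    using graph(1) max by (auto simp: weighted_phi_const intro!: Max_ge)
  then show ?thesis
    using degree_constrained_subgraph[OF graph DV] by blast
qed

end
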